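(* A rule defined on $\mathcal{E}_{\mathcal{SP}}$ satisfies own-peak-onliness, efficiency, peak responsiveness, and not obvious manipulability (NOM) if and only if it is a peak responsive simple rule.
   Context: Let $N=\{1,\dots,n\}$ be a finite set of agents. A preference $R_i$ is a continuous complete preorder on $\mathbb{R}_+\cup\{\infty\}$ ($P_i$ strict); its peak $p(R_i)$ is the set of maximal elements. $R_i$ is single-peaked if $p(R_i)$ is a singleton (identified with its element) and for $x,x'\in\mathbb{R}_+$, $xP_ix'$ whenever $x'<x\le p(R_i)$ or $p(R_i)\le x<x'$; $\mathcal{SP}$ is the set of these. An economy is $(R,\Omega)$, $R\in\mathcal{SP}^n$, $\Omega>0$; $\mathcal{E}_{\mathcal{SP}}$ is the set of economies; a rule is a map $\varphi:\mathcal{E}_{\mathcal{SP}}\to\mathbb{R}^n_+$ with $\sum_j\varphi_j(R,\Omega)=\Omega$. Properties: Efficiency: no $x\in\mathbb{R}^n_+$ with $\sum_jx_j=\Omega$ has $x_iR_i\varphi_i(R,\Omega)$ for all $i$ and $x_iP_i\varphi_i(R,\Omega)$ for some $i$. Own-peak-onliness: $p(R_i')=p(R_i)$ implies $\varphi_i(R,\Omega)=\varphi_i(R_i',R_{-i},\Omega)$. Peak responsiveness: for $i\ne j$, $p(R_i)\le p(R_j)$ implies $\varphi_i(R,\Omega)\le\varphi_j(R,\Omega)$. Option set $O^\varphi(R_i,\Omega)=\{\varphi_i(R_i,R_{-i},\Omega):R_{-i}\in\mathcal{SP}^{n-1}\}$; $R_i'$ is a manipulation at $(R_i,\Omega)$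 if $\varphi_i(R_i',R_{-i},\Omega)P_i\varphi_i(R_i,R_{-i},\Omega)$ for some $R_{-i}$, an obvious manipulation if moreover each $x'\in O^\varphi(R_i',\Omega)$ satisfies $x'P_ix$ for some $x\in O^\varphi(R_i,\Omega)$; NOM means no obvious manipulation exists. Simple rules: $z(R,\Omega)=\sum_jp(R_j)-\Omega$; agent $i$ is simple if ($z\ge0$ and $p(R_i)<\Omega/n$) or ($z\le0$ and $p(R_i)>\Omega/n$); $N^+$ is the set of simple agents, $N^-=N\setminus N^+$; $E(R,\Omega)=\left|\Omega-\left(\sum_{j\in N^+}p(R_j)+|N^-|\frac{\Omega}{n}\right)\right|$. An own-peak-only rule is simple if $\varphi_i=p(R_i)$ for $i\in N^+$, $\varphi_i=\frac{\Omega}{n}+\nu_i$ for $i\in N^-$ when $z\ge0$, $\varphi_i=\frac{\Omega}{n}-\nu_i$ for $i\in N^-$ when $z\le0$, with $0\le\nu_i\le|p(R_i)-\frac{\Omega}{n}|$ and $\sum_{j\in N^-}\nu_j=E(R,\Omega)$. *)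

theory Defs
  imports "HOL-Analysis.Analysis"
begin

text \<open>Consumption space \<open>\<real>\<^sub>+ \<union> {\<infinity>}\<close>, modelled as the nonnegative extended reals.
  A preference is a binary relation on extended reals (weak preference \<open>R x y\<close>:
  x is at least as good as y), required to relate only points of this space.
  Agents are the elements of a finite type \<open>'a\<close>, so \<open>n = CARD('a)\<close>.\<close>

type_synonym pref = "ereal \<Rightarrow> ereal \<Rightarrow> bool"

definition cspace :: "ereal set" where
  "cspace = {x. 0 \<le> x}"

definition strict :: "pref \<Rightarrow> ereal \<Rightarrow> ereal \<Rightarrow> bool" where
  "strict R x y \<longleftrightarrow> R x y \<and> \<not> R y x"

definition cont_complete_preorder :: "pref \<Rightarrow> bool" where
  "cont_complete_preorder R \<longleftrightarrow>
     (\<forall>x y. R x y \<longrightarrow> x \<in> cspace \<and> y \<in> cspace) \<and>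
     (\<forall>x\<in>cspace. \<forall>y\<in>cspace. R x y \<or> R y x) \<and>
     (\<forall>x y z. R x y \<longrightarrow> R y z \<longrightarrow> R x z) \<and>
     (\<forall>y\<in>cspace. closedin (top_of_set cspace) {x\<in>cspace. R x y} \<and>
                 closedin (top_of_set cspace) {x\<in>cspace. R y x})"

definition peaks :: "pref \<Rightarrow> ereal set" where
  "peaks R = {x\<in>cspace. \<forall>y\<in>cspace. R x y}"

definition peak :: "pref \<Rightarrow> ereal" where
  "peak R = (THE p. p \<in> peaks R)"

definition single_peaked :: "pref \<Rightarrow> bool" where
  "single_peaked R \<longleftrightarrow> cont_complete_preorder R \<and> (\<exists>p. peaks R = {p}) \<and>
     (\<forall>x x' :: real. 0 \<le> x \<and> 0 \<le> x' \<longrightarrow>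
        ((x' < x \<and> ereal x \<le> peak R) \<or> (peak R \<le> ereal x \<and> x < x')) \<longrightarrow>
        strict R (ereal x) (ereal x'))"

definition SP :: "pref set" where
  "SP = {R. single_peaked R}"

definition economy :: "('a \<Rightarrow> pref) \<Rightarrow> real \<Rightarrow> bool" where
  "economy R \<Omega> \<longleftrightarrow> (\<forall>i. R i \<in> SP) \<and> 0 < \<Omega>"

type_synonym 'a rule = "('a \<Rightarrow> pref) \<Rightarrow> real \<Rightarrow> 'a \<Rightarrow> real"

definition is_rule :: "'a::finite rule \<Rightarrow> bool" where
  "is_rule \<phi> \<longleftrightarrow> (\<forall>R \<Omega>. economy R \<Omega> \<longrightarrow>
      (\<forall>i. 0 \<le> \<phi> R \<Omega> i) \<and> (\<Sum>j\<in>UNIV. \<phi> R \<Omega> j) = \<Omega>)"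

definition efficient :: "'a::finite rule \<Rightarrow> bool" where
  "efficient \<phi> \<longleftrightarrow> (\<forall>R \<Omega>. economy R \<Omega> \<longrightarrow>
      \<not> (\<exists>x :: 'a \<Rightarrow> real. (\<forall>i. 0 \<le> x i) \<and> (\<Sum>j\<in>UNIV. x j) = \<Omega> \<and>
           (\<forall>i. R i (ereal (x i)) (ereal (\<phi> R \<Omega> i))) \<and>
           (\<exists>i. strict (R i) (ereal (x i)) (ereal (\<phi> R \<Omega> i)))))"

definition own_peak_only :: "'a::finite rule \<Rightarrow> bool" where
  "own_peak_only \<phi> \<longleftrightarrow> (\<forall>R \<Omega> i R'. economy R \<Omega> \<longrightarrow> R' \<in> SP \<longrightarrow>
      peak R' = peak (R i) \<longrightarrow> \<phi> R \<Omega> i = \<phi> (R(i := R')) \<Omega> i)"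

definition peak_responsive :: "'a::finite rule \<Rightarrow> bool" where
  "peak_responsive \<phi> \<longleftrightarrow> (\<forall>R \<Omega> i j. economy R \<Omega> \<longrightarrow> i \<noteq> j \<longrightarrow>
      peak (R i) \<le> peak (R j) \<longrightarrow> \<phi> R \<Omega> i \<le> \<phi> R \<Omega> j)"

definition option_set :: "'a::finite rule \<Rightarrow> 'a \<Rightarrow> pref \<Rightarrow> real \<Rightarrow> real set" where
  "option_set \<phi> i Ri \<Omega> = {\<phi> (R(i := Ri)) \<Omega> i | R. \<forall>j. R j \<in> SP}"

definition manipulation :: "'a::finite rule \<Rightarrow> 'a \<Rightarrow> pref \<Rightarrow> pref \<Rightarrow> real \<Rightarrow> bool" where
  "manipulation \<phi> i Ri Ri' \<Omega> \<longleftrightarrow> (\<exists>R. (\<forall>j. R j \<in> SP) \<and>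
      strict Ri (ereal (\<phi> (R(i := Ri')) \<Omega> i)) (ereal (\<phi> (R(i := Ri)) \<Omega> i)))"

definition obvious_manipulation :: "'a::finite rule \<Rightarrow> 'a \<Rightarrow> pref \<Rightarrow> pref \<Rightarrow> real \<Rightarrow> bool" where
  "obvious_manipulation \<phi> i Ri Ri' \<Omega> \<longleftrightarrow> manipulation \<phi> i Ri Ri' \<Omega> \<and>
      (\<forall>x'\<in>option_set \<phi> i Ri' \<Omega>. \<exists>x\<in>option_set \<phi> i Ri \<Omega>. strict Ri (ereal x') (ereal x))"

definition NOM :: "'a::finite rule \<Rightarrow> bool" where
  "NOM \<phi> \<longleftrightarrow> (\<forall>i Ri Ri' \<Omega>. Ri \<in> SP \<longrightarrow> Ri' \<in> SP \<longrightarrow> 0 < \<Omega> \<longrightarrow>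
      \<not> obvious_manipulation \<phi> i Ri Ri' \<Omega>)"

definition excess :: "('a::finite \<Rightarrow> pref) \<Rightarrow> real \<Rightarrow> ereal" where
  "excess R \<Omega> = (\<Sum>j\<in>UNIV. peak (R j)) - ereal \<Omega>"

definition simple_agent :: "('a::finite \<Rightarrow> pref) \<Rightarrow> real \<Rightarrow> 'a \<Rightarrow> bool" where
  "simple_agent R \<Omega> i \<longleftrightarrow>
     (excess R \<Omega> \<ge> 0 \<and> peak (R i) < ereal (\<Omega> / real CARD('a))) \<or>
     (excess R \<Omega> \<le> 0 \<and> peak (R i) > ereal (\<Omega> / real CARD('a)))"

definition E_val :: "('a::finite \<Rightarrow> pref) \<Rightarrow> real \<Rightarrow> ereal" where
  "E_val R \<Omega> = \<bar>ereal \<Omega> - ((\<Sum>j\<in>{j. simple_agent R \<Omega> j}. peak (R j))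
        + ereal (real (card {j. \<not> simple_agent R \<Omega> j}) * (\<Omega> / real CARD('a))))\<bar>"

definition simple_rule :: "'a::finite rule \<Rightarrow> bool" where
  "simple_rule \<phi> \<longleftrightarrow> own_peak_only \<phi> \<and> (\<forall>R \<Omega>. economy R \<Omega> \<longrightarrow>
     (\<exists>\<nu> :: 'a \<Rightarrow> real.
        (\<forall>i. simple_agent R \<Omega> i \<longrightarrow> ereal (\<phi> R \<Omega> i) = peak (R i)) \<and>
        (excess R \<Omega> \<ge> 0 \<longrightarrow> (\<forall>i. \<not> simple_agent R \<Omega> i \<longrightarrow>
             \<phi> R \<Omega> i = \<Omega> / real CARD('a) + \<nu> i)) \<and>
        (excess R \<Omega> \<le> 0 \<longrightarrow> (\<forall>i. \<not> simple_agent R \<Omega> i \<longrightarrow>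
             \<phi> R \<Omega> i = \<Omega> / real CARD('a) - \<nu> i)) \<and>
        (\<forall>i. \<not> simple_agent R \<Omega> i \<longrightarrow>
             0 \<le> \<nu> i \<and> ereal (\<nu> i) \<le> \<bar>peak (R i) - ereal (\<Omega> / real CARD('a))\<bar>) \<and>
        ereal (\<Sum>j\<in>{j. \<not> simple_agent R \<Omega> j}. \<nu> j) = E_val R \<Omega>))"

end

(*
  Efficiency of an allocation is the classical same-sidedness condition: if the peaks add up
  to at least \<Omega> nobody receives more than his peak, and if they add up to at most \<Omega> nobody
  receives less. A simple rule is exactly an own-peak-only rule whose allocations are
  same-sided and give every agent an amount between his peak and the equal split \<Omega>/n.

  Under peak responsiveness an agent reporting peak \<infinity> (resp. 0) receives at least (resp. at
  most) \<Omega>/n, whatever the others report. So if an agent got less than both his peak and \<Omega>/n,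
  a single-peaked preference with the same peak that prefers every amount in [\<Omega>/n, \<Omega>] to
  what he got would be obviously manipulated by reporting \<infinity>, and own-peak-onliness
  transfers his share to that preference; symmetrically with reporting 0.
  Conversely, under a peak responsive simple rule a unanimous profile yields the equal split,
  so \<Omega>/n is a possible outcome of every report, whereas truthful outcomes lie between the
  peak and \<Omega>/n and are therefore weakly preferred to it.
*)

theory Submission
  imports Defs
begin

section \<open>Single-peaked preferences\<close>

definition pref_of_utility :: "(ereal \<Rightarrow> ereal) \<Rightarrow> pref" where
  "pref_of_utility u = (\<lambda>x y. x \<in> cspace \<and> y \<in> cspace \<and> u y \<le> u x)"

lemma strict_pref_of_utility:
  "strict (pref_of_utility u) x y \<longleftrightarrow> x \<in> cspace \<and> y \<in> cspace \<and> u y < u x"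
  unfolding strict_def pref_of_utility_def by auto

lemma cont_complete_preorder_pref_of_utility:
  assumes "continuous_on cspace u"
  shows "cont_complete_preorder (pref_of_utility u)"
proof -
  have "closedin (top_of_set cspace) {x\<in>cspace. pref_of_utility u x y}"
    and "closedin (top_of_set cspace) {x\<in>cspace. pref_of_utility u y x}" if "y \<in> cspace" for y
  proof -
    have "{x\<in>cspace. pref_of_utility u x y} = cspace \<inter> u -` {u y..}"
      and "{x\<in>cspace. pref_of_utility u y x} = cspace \<inter> u -` {..u y}"
      using that by (auto simp: pref_of_utility_def)
    then show "closedin (top_of_set cspace) {x\<in>cspace. pref_of_utility u x y}"
      and "closedin (top_of_set cspace) {x\<in>cspace. pref_of_utility u y x}"
      using continuous_closedin_preimage[OF assms closed_atLeast]
        continuous_closedin_preimage[OF assms closed_atMost] by auto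
  qed
  then show ?thesis
    unfolding cont_complete_preorder_def by (auto simp: pref_of_utility_def)
qed

lemma pref_of_utility_SP:
  assumes "continuous_on cspace u" "p \<in> cspace"
    and "\<And>x. x \<in> cspace \<Longrightarrow> x \<noteq> p \<Longrightarrow> u x < u p"
    and "\<And>x x'::real. 0 \<le> x' \<Longrightarrow> x' < x \<Longrightarrow> ereal x \<le> p \<Longrightarrow> u (ereal x') < u (ereal x)"
    and "\<And>x x'::real. 0 \<le> x \<Longrightarrow> x < x' \<Longrightarrow> p \<le> ereal x \<Longrightarrow> u (ereal x') < u (ereal x)"
  shows "pref_of_utility u \<in> SP" "peak (pref_of_utility u) = p"
proof -
  have peaks: "peaks (pref_of_utility u) = {p}"
    using assms(2,3) unfolding peaks_def pref_of_utility_def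
    by (force simp: not_le[symmetric] intro: less_imp_le)
  then show peak: "peak (pref_of_utility u) = p"
    unfolding peak_def by auto
  show "pref_of_utility u \<in> SP"
    unfolding SP_def single_peaked_def
    using cont_complete_preorder_pref_of_utility[OF assms(1)] peaks peak assms(4,5)
    by (auto simp: strict_pref_of_utility cspace_def)
qed

definition affine_ereal :: "real \<Rightarrow> real \<Rightarrow> ereal \<Rightarrow> ereal" where
  "affine_ereal a b x = ereal a * x + ereal b"

lemma continuous_on_affine_ereal: "continuous_on A (affine_ereal a b)"
  unfolding continuous_on_def affine_ereal_def
proof
  fix x
  have "((\<lambda>y. ereal a * y) \<longlongrightarrow> ereal a * x) (at x within A)"
    by (intro tendsto_cmult_ereal tendsto_ident_at) auto
  then show "((\<lambda>y. ereal a * y + ereal b) \<longlongrightarrow> ereal a * x + ereal b) (at x within A)"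
    by (intro tendsto_add_ereal_general) auto
qed

definition tent :: "real \<Rightarrow> real \<Rightarrow> real \<Rightarrow> ereal \<Rightarrow> ereal" where
  "tent a b p x = min (affine_ereal a (- a * p) x) (affine_ereal (- b) (b * p) x)"

lemma tent_ereal:
  assumes "0 < a" "0 < b"
  shows "tent a b p (ereal x) = ereal (if x \<le> p then a * (x - p) else b * (p - x))"
proof -
  have "x \<le> p \<longleftrightarrow> (a + b) * x \<le> (a + b) * p"
    using assms by simp
  then show ?thesis
    unfolding tent_def affine_ereal_def by (auto simp: min_def algebra_simps)
qed

lemma tent_SP:
  assumes "0 < a" "0 < b" "0 \<le> p"
  shows "pref_of_utility (tent a b p) \<in> SP" "peak (pref_of_utility (tent a b p)) = ereal p"
proof -
  have cont: "continuous_on cspace (tent a b p)"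
    unfolding tent_def by (intro continuous_on_min continuous_on_affine_ereal)
  have max: "tent a b p x < tent a b p (ereal p)" if "x \<in> cspace" "x \<noteq> ereal p" for x
  proof (cases x)
    case (real r)
    then show ?thesis
      using that assms by (auto simp: tent_ereal mult_pos_neg)
  qed (use that assms in \<open>auto simp: tent_def affine_ereal_def cspace_def\<close>)
  have left: "tent a b p (ereal x') < tent a b p (ereal x)" if "x' < x" "ereal x \<le> ereal p" for x x'
    using that assms by (simp add: tent_ereal mult_strict_left_mono)
  have right: "tent a b p (ereal x') < tent a b p (ereal x)"
    if "x < x'" "ereal p \<le> ereal x" for x x'
    using that assms
    by (cases "x = p") (simp_all add: tent_ereal mult_pos_neg mult_strict_left_mono)
  show "pref_of_utility (tent a b p) \<in> SP" "peak (pref_of_utility (tent a b p)) = ereal p"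
    using pref_of_utility_SP[OF cont, of "ereal p"] assms max left right
    by (auto simp: cspace_def)
qed

abbreviation pref_peak_inf :: pref where
  "pref_peak_inf \<equiv> pref_of_utility (\<lambda>x. x)"

abbreviation pref_peak_zero :: pref where
  "pref_peak_zero \<equiv> pref_of_utility (tent 1 1 0)"

lemma pref_peak_inf_SP: "pref_peak_inf \<in> SP" "peak pref_peak_inf = \<infinity>"
  using pref_of_utility_SP[OF continuous_on_id, of \<infinity>] by (auto simp: cspace_def)

lemma pref_peak_zero_SP: "pref_peak_zero \<in> SP" "peak pref_peak_zero = 0"
  using tent_SP[of 1 1 0] by (auto simp: zero_ereal_def)

lemma SP_peaks: "R \<in> SP \<Longrightarrow> peaks R = {peak R}"
  unfolding SP_def single_peaked_def peak_def by auto

lemma SP_peak_nonneg: "R \<in> SP \<Longrightarrow> 0 \<le> peak R"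
  using SP_peaks[of R] unfolding peaks_def cspace_def by auto

lemma SP_refl: "R \<in> SP \<Longrightarrow> 0 \<le> x \<Longrightarrow> R x x"
  unfolding SP_def single_peaked_def cont_complete_preorder_def cspace_def by auto

lemma SP_strict_below_peak:
  "R \<in> SP \<Longrightarrow> 0 \<le> x' \<Longrightarrow> x' < x \<Longrightarrow> ereal x \<le> peak R \<Longrightarrow> strict R (ereal x) (ereal x')"
  unfolding SP_def single_peaked_def by auto

lemma SP_strict_above_peak:
  "R \<in> SP \<Longrightarrow> 0 \<le> x \<Longrightarrow> x < x' \<Longrightarrow> peak R \<le> ereal x \<Longrightarrow> strict R (ereal x) (ereal x')"
  unfolding SP_def single_peaked_def by auto

lemma SP_weakly_prefers_closer_to_peak:
  assumes "R \<in> SP" "0 \<le> w" "ereal x \<in> {min (peak R) (ereal w)..max (peak R) (ereal w)}"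
  shows "R (ereal x) (ereal w)"
proof -
  consider "x = w" | "w < x" "ereal x \<le> peak R" | "x < w" "peak R \<le> ereal x"
    using assms(3) by (cases x w rule: linorder_cases) (auto simp: min_def max_def split: if_splits)
  then show ?thesis
  proof cases
    case 1
    then show ?thesis using SP_refl[OF assms(1), of "ereal w"] assms(2) by simp
  next
    case 2
    then show ?thesis using SP_strict_below_peak[OF assms(1)] assms(2) by (simp add: strict_def)
  next
    case 3
    moreover have "0 \<le> x"
      using 3 SP_peak_nonneg[OF assms(1)] by (cases "peak R") auto
    ultimately show ?thesis using SP_strict_above_peak[OF assms(1)] by (simp add: strict_def)
  qed
qed

section \<open>Rules and peak responsiveness\<close>

lemma economy_SP: "economy R \<Omega> \<Longrightarrow> R i \<in> SP"
  and economy_pos: "economy R \<Omega> \<Longrightarrow> 0 < \<Omega>"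
  unfolding economy_def by auto

lemma rule_nonneg: "is_rule \<phi> \<Longrightarrow> economy R \<Omega> \<Longrightarrow> 0 \<le> \<phi> R \<Omega> i"
  and rule_sum: "is_rule \<phi> \<Longrightarrow> economy R \<Omega> \<Longrightarrow> (\<Sum>j\<in>UNIV. \<phi> R \<Omega> j) = \<Omega>"
  unfolding is_rule_def by auto

lemma rule_le_endowment:
  assumes "is_rule \<phi>" "economy R \<Omega>"
  shows "\<phi> R \<Omega> i \<le> \<Omega>"
  using member_le_sum[of i UNIV "\<phi> R \<Omega>"] rule_nonneg[OF assms] rule_sum[OF assms] by simp

lemma peak_responsive_max_peak_share_ge:
  fixes \<phi> :: "'a::finite rule"
  assumes "is_rule \<phi>" "peak_responsive \<phi>" "economy R \<Omega>" "\<And>j. peak (R j) \<le> peak (R i)"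
  shows "\<Omega> / real CARD('a) \<le> \<phi> R \<Omega> i"
proof -
  have "\<phi> R \<Omega> j \<le> \<phi> R \<Omega> i" for j
    using assms(2-4) unfolding peak_responsive_def by (cases "j = i") auto
  then have "\<Omega> \<le> real CARD('a) * \<phi> R \<Omega> i"
    using sum_bounded_above[of UNIV "\<phi> R \<Omega>"] rule_sum[OF assms(1,3)] by simp
  then show ?thesis
    by (simp add: divide_le_eq mult.commute)
qed

lemma peak_responsive_min_peak_share_le:
  fixes \<phi> :: "'a::finite rule"
  assumes "is_rule \<phi>" "peak_responsive \<phi>" "economy R \<Omega>" "\<And>j. peak (R i) \<le> peak (R j)"
  shows "\<phi> R \<Omega> i \<le> \<Omega> / real CARD('a)"
proof -
  have "\<phi> R \<Omega> i \<le> \<phi> R \<Omega> j" for j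
    using assms(2-4) unfolding peak_responsive_def by (cases "j = i") auto
  then have "real CARD('a) * \<phi> R \<Omega> i \<le> \<Omega>"
    using sum_bounded_below[of UNIV "\<phi> R \<Omega> i" "\<phi> R \<Omega>"] rule_sum[OF assms(1,3)] by simp
  then show ?thesis
    by (simp add: le_divide_eq mult.commute)
qed

section \<open>Obvious manipulations\<close>

definition between_peaks_and_equal_split :: "('a::finite \<Rightarrow> pref) \<Rightarrow> real \<Rightarrow> ('a \<Rightarrow> real) \<Rightarrow> bool" where
  "between_peaks_and_equal_split R \<Omega> f \<longleftrightarrow> (\<forall>i. ereal (f i) \<in>
     {min (peak (R i)) (ereal (\<Omega> / real CARD('a)))..max (peak (R i)) (ereal (\<Omega> / real CARD('a)))})"

lemma exists_SP_preferring_up_to: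
  assumes "0 \<le> x" "ereal x < p"
  shows "\<exists>R\<in>SP. peak R = p \<and> (\<forall>y. x < y \<and> y \<le> b \<longrightarrow> strict R (ereal y) (ereal x))"
proof (cases p)
  case (real q)
  text \<open>A tent with a right slope so flat that the whole interval \<open>(q, b]\<close> beats \<open>x\<close>.\<close>
  define d where "d = (q - x) / (\<bar>b\<bar> + 1)"
  have "x < q" using assms real by simp
  then have "0 < d" "d * \<bar>b\<bar> < q - x"
    unfolding d_def by (auto simp: field_simps)
  moreover have "0 \<le> q" using assms real by simp
  moreover have "tent 1 d q (ereal x) < tent 1 d q (ereal y)" if "x < y" "y \<le> b" for y
  proof (cases "y \<le> q")
    case False
    have "d * (y - q) \<le> d * \<bar>b\<bar>"
      using that False \<open>0 < d\<close> \<open>0 \<le> q\<close> by (intro mult_left_mono) auto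
    then show ?thesis
      using False \<open>x < q\<close> \<open>0 < d\<close> \<open>d * \<bar>b\<bar> < q - x\<close> by (simp add: tent_ereal algebra_simps)
  qed (use that \<open>0 < d\<close> in \<open>simp add: tent_ereal\<close>)
  ultimately show ?thesis
    using tent_SP[of 1 d q] real assms(1)
    by (intro bexI[of _ "pref_of_utility (tent 1 d q)"])
      (auto simp: strict_pref_of_utility cspace_def)
next
  case PInf
  then show ?thesis
    using pref_peak_inf_SP assms(1) by (auto simp: strict_pref_of_utility cspace_def)
qed (use assms in simp)

lemma exists_SP_preferring_down_to_zero:
  assumes "0 \<le> q" "q < x"
  shows "\<exists>R\<in>SP. peak R = ereal q \<and> (\<forall>y. 0 \<le> y \<and> y < x \<longrightarrow> strict R (ereal y) (ereal x))"
proof -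
  text \<open>A tent with a left slope so flat that the whole interval \<open>[0, q)\<close> beats \<open>x\<close>.\<close>
  define d where "d = (x - q) / (q + 1)"
  have "0 < d" "d * q < x - q"
    using assms unfolding d_def by (auto simp: field_simps)
  moreover have "tent d 1 q (ereal x) < tent d 1 q (ereal y)" if "0 \<le> y" "y < x" for y
  proof (cases "y \<le> q")
    case True
    have "d * (q - y) \<le> d * q"
      using that \<open>0 < d\<close> by (intro mult_left_mono) auto
    then show ?thesis
      using True assms \<open>0 < d\<close> \<open>d * q < x - q\<close> by (simp add: tent_ereal algebra_simps)
  qed (use that assms \<open>0 < d\<close> in \<open>simp add: tent_ereal\<close>)
  ultimately show ?thesis
    using tent_SP[of d 1 q] assms
    by (intro bexI[of _ "pref_of_utility (tent d 1 q)"])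
      (auto simp: strict_pref_of_utility cspace_def)
qed

lemma obvious_manipulationI:
  assumes "\<forall>j. R j \<in> SP"
    and "\<And>R'. \<forall>j. R' j \<in> SP \<Longrightarrow>
           strict Ri (ereal (\<phi> (R'(i := Ri')) \<Omega> i)) (ereal (\<phi> (R(i := Ri)) \<Omega> i))"
  shows "obvious_manipulation \<phi> i Ri Ri' \<Omega>"
  unfolding obvious_manipulation_def manipulation_def option_set_def
  using assms by blast

lemma NOM_share_ge_min_peak_equal_split:
  fixes \<phi> :: "'a::finite rule"
  assumes rule: "is_rule \<phi>" and opo: "own_peak_only \<phi>" and pr: "peak_responsive \<phi>"
    and nom: "NOM \<phi>" and ec: "economy R \<Omega>"
  shows "min (peak (R i)) (ereal (\<Omega> / real CARD('a))) \<le> ereal (\<phi> R \<Omega> i)"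
proof (rule ccontr)
  define w where "w = \<Omega> / real CARD('a)"
  define x where "x = \<phi> R \<Omega> i"
  assume "\<not> ?thesis"
  then have "ereal x < peak (R i)" "x < w"
    unfolding x_def w_def by (simp_all add: not_le)
  then obtain Ri where Ri: "Ri \<in> SP" "peak Ri = peak (R i)"
    and better: "\<And>y. x < y \<Longrightarrow> y \<le> \<Omega> \<Longrightarrow> strict Ri (ereal y) (ereal x)"
    using exists_SP_preferring_up_to[of x "peak (R i)" \<Omega>] rule_nonneg[OF rule ec] x_def by blast
  have truthful: "\<phi> (R(i := Ri)) \<Omega> i = x"
    using opo ec Ri unfolding own_peak_only_def x_def by metis
  text \<open>Reporting peak \<open>\<infinity>\<close> guarantees at least \<open>w\<close>, which \<open>Ri\<close> prefers to \<open>x\<close>.\<close>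
  have "obvious_manipulation \<phi> i Ri pref_peak_inf \<Omega>"
  proof (rule obvious_manipulationI)
    show "\<forall>j. R j \<in> SP"
      using ec by (simp add: economy_SP)
    fix R' :: "'a \<Rightarrow> pref"
    assume "\<forall>j. R' j \<in> SP"
    then have ec': "economy (R'(i := pref_peak_inf)) \<Omega>"
      using economy_pos[OF ec] pref_peak_inf_SP by (simp add: economy_def)
    have "w \<le> \<phi> (R'(i := pref_peak_inf)) \<Omega> i"
      unfolding w_def
      using peak_responsive_max_peak_share_ge[OF rule pr ec'] pref_peak_inf_SP by simp
    then show "strict Ri (ereal (\<phi> (R'(i := pref_peak_inf)) \<Omega> i)) (ereal (\<phi> (R(i := Ri)) \<Omega> i))"
      using better rule_le_endowment[OF rule ec'] truthful \<open>x < w\<close> by simp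
  qed
  then show False
    using nom Ri pref_peak_inf_SP economy_pos[OF ec] unfolding NOM_def by blast
qed

lemma NOM_share_le_max_peak_equal_split:
  fixes \<phi> :: "'a::finite rule"
  assumes rule: "is_rule \<phi>" and opo: "own_peak_only \<phi>" and pr: "peak_responsive \<phi>"
    and nom: "NOM \<phi>" and ec: "economy R \<Omega>"
  shows "ereal (\<phi> R \<Omega> i) \<le> max (peak (R i)) (ereal (\<Omega> / real CARD('a)))"
proof (rule ccontr)
  define w where "w = \<Omega> / real CARD('a)"
  define x where "x = \<phi> R \<Omega> i"
  assume "\<not> ?thesis"
  then have "peak (R i) < ereal x" "w < x"
    unfolding x_def w_def by (simp_all add: not_le)
  moreover have "0 \<le> peak (R i)"
    using SP_peak_nonneg economy_SP[OF ec] by blast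
  ultimately obtain q where "peak (R i) = ereal q" "0 \<le> q" "q < x"
    by (cases "peak (R i)") auto
  then obtain Ri where Ri: "Ri \<in> SP" "peak Ri = peak (R i)"
    and better: "\<And>y. 0 \<le> y \<Longrightarrow> y < x \<Longrightarrow> strict Ri (ereal y) (ereal x)"
    using exists_SP_preferring_down_to_zero[of q x] by auto
  have truthful: "\<phi> (R(i := Ri)) \<Omega> i = x"
    using opo ec Ri unfolding own_peak_only_def x_def by metis
  text \<open>Reporting peak \<open>0\<close> guarantees at most \<open>w\<close>, which \<open>Ri\<close> prefers to \<open>x\<close>.\<close>
  have "obvious_manipulation \<phi> i Ri pref_peak_zero \<Omega>"
  proof (rule obvious_manipulationI)
    show "\<forall>j. R j \<in> SP"
      using ec by (simp add: economy_SP)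
    fix R' :: "'a \<Rightarrow> pref"
    assume R': "\<forall>j. R' j \<in> SP"
    then have ec': "economy (R'(i := pref_peak_zero)) \<Omega>"
      using economy_pos[OF ec] pref_peak_zero_SP by (simp add: economy_def)
    have "\<phi> (R'(i := pref_peak_zero)) \<Omega> i \<le> w"
      unfolding w_def using peak_responsive_min_peak_share_le[OF rule pr ec'] pref_peak_zero_SP
        SP_peak_nonneg R' by simp
    then show "strict Ri (ereal (\<phi> (R'(i := pref_peak_zero)) \<Omega> i)) (ereal (\<phi> (R(i := Ri)) \<Omega> i))"
      using better rule_nonneg[OF rule ec'] truthful \<open>w < x\<close> by simp
  qed
  then show False
    using nom Ri pref_peak_zero_SP economy_pos[OF ec] unfolding NOM_def by blast
qed

lemma NOM_imp_between_peaks_and_equal_split: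
  fixes \<phi> :: "'a::finite rule"
  assumes "is_rule \<phi>" "own_peak_only \<phi>" "peak_responsive \<phi>" "NOM \<phi>" "economy R \<Omega>"
  shows "between_peaks_and_equal_split R \<Omega> (\<phi> R \<Omega>)"
  unfolding between_peaks_and_equal_split_def
  using NOM_share_ge_min_peak_equal_split[OF assms] NOM_share_le_max_peak_equal_split[OF assms]
  by simp

lemma NOM_if_between_peaks_and_equal_split:
  fixes \<phi> :: "'a::finite rule"
  assumes rule: "is_rule \<phi>" and pr: "peak_responsive \<phi>"
    and between: "\<And>R \<Omega>. economy R \<Omega> \<Longrightarrow> between_peaks_and_equal_split R \<Omega> (\<phi> R \<Omega>)"
  shows "NOM \<phi>"
  unfolding NOM_def
proof (intro allI impI notI)
  fix i :: 'a and Ri Ri' :: pref and \<Omega> :: real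
  assume Ri: "Ri \<in> SP" and Ri': "Ri' \<in> SP" and "0 < \<Omega>"
    and manip: "obvious_manipulation \<phi> i Ri Ri' \<Omega>"
  define w where "w = \<Omega> / real CARD('a)"
  have ec: "economy (\<lambda>_. Ri') \<Omega>"
    using Ri' \<open>0 < \<Omega>\<close> by (simp add: economy_def)
  text \<open>In the unanimous profile all peaks are equal, so peak responsiveness forces
    the equal split.\<close>
  have "\<phi> (\<lambda>_. Ri') \<Omega> i = w"
    unfolding w_def
    using peak_responsive_max_peak_share_ge[OF rule pr ec]
      peak_responsive_min_peak_share_le[OF rule pr ec]
    by (intro antisym) auto
  then have "w \<in> option_set \<phi> i Ri' \<Omega>"
    unfolding option_set_def using Ri' by (auto intro!: exI[of _ "\<lambda>_. Ri'"] simp: fun_upd_idem)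
  then obtain x where "x \<in> option_set \<phi> i Ri \<Omega>" and worse: "strict Ri (ereal w) (ereal x)"
    using manip unfolding obvious_manipulation_def by blast
  then obtain R where R: "\<forall>j. R j \<in> SP" and x: "x = \<phi> (R(i := Ri)) \<Omega> i"
    unfolding option_set_def by auto
  have "economy (R(i := Ri)) \<Omega>"
    using R Ri \<open>0 < \<Omega>\<close> by (simp add: economy_def)
  then have "ereal x \<in> {min (peak Ri) (ereal w)..max (peak Ri) (ereal w)}"
    using between unfolding between_peaks_and_equal_split_def x w_def by (metis fun_upd_same)
  then have "Ri (ereal x) (ereal w)"
    using SP_weakly_prefers_closer_to_peak[OF Ri] \<open>0 < \<Omega>\<close> unfolding w_def by simp
  then show False
    using worse by (simp add: strict_def)
qed

section \<open>Efficiency\<close>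

definition pareto_optimal :: "('a::finite \<Rightarrow> pref) \<Rightarrow> real \<Rightarrow> ('a \<Rightarrow> real) \<Rightarrow> bool" where
  "pareto_optimal R \<Omega> f \<longleftrightarrow>
     \<not> (\<exists>x :: 'a \<Rightarrow> real. (\<forall>i. 0 \<le> x i) \<and> (\<Sum>j\<in>UNIV. x j) = \<Omega> \<and>
          (\<forall>i. R i (ereal (x i)) (ereal (f i))) \<and> (\<exists>i. strict (R i) (ereal (x i)) (ereal (f i))))"

lemma efficient_iff_pareto_optimal:
  "efficient \<phi> \<longleftrightarrow> (\<forall>R \<Omega>. economy R \<Omega> \<longrightarrow> pareto_optimal R \<Omega> (\<phi> R \<Omega>))"
  unfolding efficient_def pareto_optimal_def ..

definition same_sided :: "('a::finite \<Rightarrow> pref) \<Rightarrow> real \<Rightarrow> ('a \<Rightarrow> real) \<Rightarrow> bool" where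
  "same_sided R \<Omega> f \<longleftrightarrow>
     (0 \<le> excess R \<Omega> \<longrightarrow> (\<forall>i. ereal (f i) \<le> peak (R i))) \<and>
     (excess R \<Omega> \<le> 0 \<longrightarrow> (\<forall>i. peak (R i) \<le> ereal (f i)))"

lemma excess_nonneg_iff: "0 \<le> excess R \<Omega> \<longleftrightarrow> ereal \<Omega> \<le> (\<Sum>j\<in>UNIV. peak (R j))"
  by (cases "\<Sum>j\<in>UNIV. peak (R j)") (auto simp: excess_def)

lemma excess_nonpos_iff: "excess R \<Omega> \<le> 0 \<longleftrightarrow> (\<Sum>j\<in>UNIV. peak (R j)) \<le> ereal \<Omega>"
  by (cases "\<Sum>j\<in>UNIV. peak (R j)") (auto simp: excess_def)

lemma sum_transfer:
  fixes f :: "'a::finite \<Rightarrow> real"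
  shows "(\<Sum>k\<in>UNIV. f k - (if k = i then e else 0) + (if k = j then e else 0)) = sum f UNIV"
  by (simp add: sum.distrib sum_subtractf)

lemma pareto_optimal_not_over_and_under:
  assumes opt: "pareto_optimal R \<Omega> f" and SP: "\<forall>k. R k \<in> SP"
    and nonneg: "\<forall>k. 0 \<le> f k" and sum: "sum f UNIV = \<Omega>"
    and over: "peak (R i) < ereal (f i)" and under: "ereal (f j) < peak (R j)"
  shows False
proof -
  have "i \<noteq> j"
    using over under by auto
  obtain q where q: "peak (R i) = ereal q" "0 \<le> q" "q < f i"
    using over SP_peak_nonneg[of "R i"] SP by (cases "peak (R i)") auto
  obtain c where c: "f j < c" "ereal c < peak (R j)"
    using ereal_dense2[OF under] by auto
  define e where "e = min (f i - q) (c - f j)"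
  have "0 < e"
    unfolding e_def using q c by simp
  text \<open>Moving \<open>e\<close> from the over-served \<open>i\<close> to the under-served \<open>j\<close> brings both
    closer to their peaks.\<close>
  define x where "x k = f k - (if k = i then e else 0) + (if k = j then e else 0)" for k
  have "strict (R i) (ereal (x i)) (ereal (f i))"
    using SP_strict_above_peak[of "R i" "f i - e" "f i"] SP q \<open>0 < e\<close> \<open>i \<noteq> j\<close>
    unfolding x_def e_def by simp
  moreover have "strict (R j) (ereal (x j)) (ereal (f j))"
    using SP_strict_below_peak[of "R j" "f j" "f j + e"] SP nonneg c \<open>0 < e\<close> \<open>i \<noteq> j\<close>
    unfolding x_def e_def by (simp add: order_trans[OF _ less_imp_le[OF c(2)]])
  moreover have "R k (ereal (x k)) (ereal (f k))" if "k \<noteq> i" "k \<noteq> j" for k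
    using SP_refl[of "R k" "ereal (f k)"] SP nonneg that unfolding x_def by simp
  moreover have "0 \<le> x k" for k
    using nonneg q \<open>0 < e\<close> unfolding x_def e_def by auto
  ultimately show False
    using opt sum_transfer[where f = f and i = i and j = j and e = e] sum
    unfolding pareto_optimal_def x_def[symmetric]
    by (metis strict_def)
qed

lemma sum_ereal_strict_mono:
  fixes p q :: "'a::finite \<Rightarrow> ereal"
  assumes "\<And>k. p k \<le> q k" "p i < q i" "\<And>k. -\<infinity> < p k" "\<And>k. q k < \<infinity>"
  shows "sum p UNIV < sum q UNIV"
proof -
  define p' q' where "p' k = real_of_ereal (p k)" and "q' k = real_of_ereal (q k)" for k
  have p: "p k = ereal (p' k)" and q: "q k = ereal (q' k)" for k
    using assms(1,3,4)[of k] unfolding p'_def q'_def by (cases "p k"; cases "q k"; simp)+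
  have "sum p' UNIV < sum q' UNIV"
    using assms(1,2) by (intro sum_strict_mono_ex1) (auto simp: p q)
  moreover have "sum p UNIV = ereal (sum p' UNIV)" "sum q UNIV = ereal (sum q' UNIV)"
    by (simp_all add: p q)
  ultimately show ?thesis
    by simp
qed

lemma peak_finite_if_excess_nonpos:
  assumes "\<forall>j. R j \<in> SP" "excess R \<Omega> \<le> 0"
  shows "peak (R k) < \<infinity>"
proof -
  have "(\<Sum>j\<in>UNIV. peak (R j)) \<noteq> \<infinity>"
    using assms(2) by (auto simp: excess_nonpos_iff)
  then show ?thesis
    using sum_Pinfty[of "\<lambda>j. peak (R j)" UNIV] by (cases "peak (R k)") auto
qed

lemma exists_under_served_if_excess_nonneg:
  assumes "\<forall>k. R k \<in> SP" "0 \<le> excess R \<Omega>" "sum f UNIV = \<Omega>" "peak (R i) < ereal (f i)"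
  shows "\<exists>j. ereal (f j) < peak (R j)"
proof (rule ccontr)
  assume "\<not> ?thesis"
  then have "(\<Sum>j\<in>UNIV. peak (R j)) < (\<Sum>j\<in>UNIV. ereal (f j))"
    using assms(1,4) SP_peak_nonneg
    by (intro sum_ereal_strict_mono) (auto simp: not_less intro: less_le_trans[of _ 0])
  then show False
    using assms(2,3) by (simp add: excess_nonneg_iff)
qed

lemma exists_over_served_if_excess_nonpos:
  assumes "\<forall>k. R k \<in> SP" "excess R \<Omega> \<le> 0" "sum f UNIV = \<Omega>" "ereal (f i) < peak (R i)"
  shows "\<exists>j. peak (R j) < ereal (f j)"
proof (rule ccontr)
  assume "\<not> ?thesis"
  then have "(\<Sum>j\<in>UNIV. ereal (f j)) < (\<Sum>j\<in>UNIV. peak (R j))"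
    using assms(4) peak_finite_if_excess_nonpos[OF assms(1,2)]
    by (intro sum_ereal_strict_mono) (auto simp: not_less)
  then show False
    using assms(2,3) by (simp add: excess_nonpos_iff)
qed

lemma pareto_optimal_imp_same_sided:
  assumes opt: "pareto_optimal R \<Omega> f" and SP: "\<forall>k. R k \<in> SP"
    and nonneg: "\<forall>k. 0 \<le> f k" and sum: "sum f UNIV = \<Omega>"
  shows "same_sided R \<Omega> f"
  unfolding same_sided_def
proof (intro conjI impI allI)
  fix i
  show "ereal (f i) \<le> peak (R i)" if excess: "0 \<le> excess R \<Omega>"
  proof (rule ccontr)
    assume "\<not> ?thesis"
    then have over: "peak (R i) < ereal (f i)"
      by simp
    then obtain j where "ereal (f j) < peak (R j)"
      using exists_under_served_if_excess_nonneg[OF SP excess sum] by blast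
    with over show False
      by (rule pareto_optimal_not_over_and_under[OF opt SP nonneg sum])
  qed
  show "peak (R i) \<le> ereal (f i)" if excess: "excess R \<Omega> \<le> 0"
  proof (rule ccontr)
    assume "\<not> ?thesis"
    then have under: "ereal (f i) < peak (R i)"
      by simp
    then obtain j where "peak (R j) < ereal (f j)"
      using exists_over_served_if_excess_nonpos[OF SP excess sum] by blast
    then show False
      using under by (rule pareto_optimal_not_over_and_under[OF opt SP nonneg sum])
  qed
qed

lemma same_sided_imp_pareto_optimal:
  assumes sided: "same_sided R \<Omega> f" and SP: "\<forall>k. R k \<in> SP"
    and nonneg: "\<forall>k. 0 \<le> f k" and sum: "sum f UNIV = \<Omega>"
  shows "pareto_optimal R \<Omega> f"
  unfolding pareto_optimal_def
proof (intro notI, elim exE conjE)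
  fix x :: "'a \<Rightarrow> real" and i
  assume x_nonneg: "\<forall>k. 0 \<le> x k" and x_sum: "sum x UNIV = \<Omega>"
    and weakly_better: "\<forall>k. R k (ereal (x k)) (ereal (f k))"
    and strictly_better: "strict (R i) (ereal (x i)) (ereal (f i))"
  text \<open>On the side of the peaks where \<open>f\<close> lies, moving away from \<open>f\<close> is strictly worse;
    since both allocations exhaust \<open>\<Omega>\<close>, \<open>x\<close> cannot move anyone.\<close>
  have "x = f"
  proof (cases "0 \<le> excess R \<Omega>")
    case True
    have "f k \<le> x k" for k
    proof (rule ccontr)
      assume "\<not> f k \<le> x k"
      then have "strict (R k) (ereal (f k)) (ereal (x k))"
        using SP_strict_below_peak[of "R k" "x k" "f k"] SP x_nonneg sided True
        unfolding same_sided_def by simp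
      then show False
        using weakly_better by (simp add: strict_def)
    qed
    then have "f k = x k" for k
      using sum x_sum by (intro sum_mono_inv[of f UNIV x]) simp_all
    then show ?thesis
      by auto
  next
    case False
    have "x k \<le> f k" for k
    proof (rule ccontr)
      assume "\<not> x k \<le> f k"
      then have "strict (R k) (ereal (f k)) (ereal (x k))"
        using SP_strict_above_peak[of "R k" "f k" "x k"] SP nonneg sided False
        unfolding same_sided_def by simp
      then show False
        using weakly_better by (simp add: strict_def)
    qed
    then have "x k = f k" for k
      using sum x_sum by (intro sum_mono_inv[of x UNIV f]) simp_all
    then show ?thesis
      by auto
  qed
  then show False
    using strictly_better by (simp add: strict_def)
qed

lemma pareto_optimal_iff_same_sided:
  assumes "\<forall>k. R k \<in> SP" "\<forall>k. 0 \<le> f k" "sum f UNIV = \<Omega>"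
  shows "pareto_optimal R \<Omega> f \<longleftrightarrow> same_sided R \<Omega> f"
  using pareto_optimal_imp_same_sided[OF _ assms] same_sided_imp_pareto_optimal[OF _ assms] by blast

section \<open>Simple allocations\<close>

definition simple_allocation :: "('a::finite \<Rightarrow> pref) \<Rightarrow> real \<Rightarrow> ('a \<Rightarrow> real) \<Rightarrow> bool" where
  "simple_allocation R \<Omega> f \<longleftrightarrow> (\<exists>\<nu> :: 'a \<Rightarrow> real.
     (\<forall>i. simple_agent R \<Omega> i \<longrightarrow> ereal (f i) = peak (R i)) \<and>
     (excess R \<Omega> \<ge> 0 \<longrightarrow> (\<forall>i. \<not> simple_agent R \<Omega> i \<longrightarrow> f i = \<Omega> / real CARD('a) + \<nu> i)) \<and>
     (excess R \<Omega> \<le> 0 \<longrightarrow> (\<forall>i. \<not> simple_agent R \<Omega> i \<longrightarrow> f i = \<Omega> / real CARD('a) - \<nu> i)) \<and>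
     (\<forall>i. \<not> simple_agent R \<Omega> i \<longrightarrow>
        0 \<le> \<nu> i \<and> ereal (\<nu> i) \<le> \<bar>peak (R i) - ereal (\<Omega> / real CARD('a))\<bar>) \<and>
     ereal (\<Sum>j\<in>{j. \<not> simple_agent R \<Omega> j}. \<nu> j) = E_val R \<Omega>)"

lemma simple_rule_iff_simple_allocation:
  "simple_rule \<phi> \<longleftrightarrow> own_peak_only \<phi> \<and> (\<forall>R \<Omega>. economy R \<Omega> \<longrightarrow> simple_allocation R \<Omega> (\<phi> R \<Omega>))"
  unfolding simple_rule_def simple_allocation_def ..

lemma ereal_add_le_if_le_abs_diff: "ereal w \<le> p \<Longrightarrow> ereal v \<le> \<bar>p - ereal w\<bar> \<Longrightarrow> ereal (w + v) \<le> p"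
  by (cases p) auto

lemma ereal_le_diff_if_le_abs_diff: "p \<le> ereal w \<Longrightarrow> ereal v \<le> \<bar>p - ereal w\<bar> \<Longrightarrow> p \<le> ereal (w - v)"
  by (cases p) auto

lemma abs_diff_le_if_between:
  "ereal x \<in> {min p (ereal w)..max p (ereal w)} \<Longrightarrow> ereal \<bar>x - w\<bar> \<le> \<bar>p - ereal w\<bar>"
  by (cases p) (auto simp: min_def max_def split: if_splits)

lemma simple_allocation_simple_agent:
  "simple_allocation R \<Omega> f \<Longrightarrow> simple_agent R \<Omega> i \<Longrightarrow> ereal (f i) = peak (R i)"
  by (auto simp: simple_allocation_def)

lemma simple_allocation_nonsimple_agent:
  fixes R :: "'a::finite \<Rightarrow> pref"
  assumes "simple_allocation R \<Omega> f" "\<not> simple_agent R \<Omega> i"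
  shows "0 \<le> excess R \<Omega> \<Longrightarrow>
      ereal (\<Omega> / real CARD('a)) \<le> ereal (f i) \<and> ereal (f i) \<le> peak (R i)"
    and "excess R \<Omega> \<le> 0 \<Longrightarrow>
      peak (R i) \<le> ereal (f i) \<and> ereal (f i) \<le> ereal (\<Omega> / real CARD('a))"
proof -
  define w where "w = \<Omega> / real CARD('a)"
  obtain \<nu> where up: "0 \<le> excess R \<Omega> \<Longrightarrow> f i = w + \<nu> i"
    and down: "excess R \<Omega> \<le> 0 \<Longrightarrow> f i = w - \<nu> i"
    and \<nu>: "0 \<le> \<nu> i" "ereal (\<nu> i) \<le> \<bar>peak (R i) - ereal w\<bar>"
    using assms unfolding simple_allocation_def w_def by (auto intro: that)
  show "ereal w \<le> ereal (f i) \<and> ereal (f i) \<le> peak (R i)" if "0 \<le> excess R \<Omega>"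
  proof -
    have "ereal w \<le> peak (R i)"
      using that assms(2) by (simp add: simple_agent_def w_def not_less)
    then show ?thesis
      using up[OF that] \<nu> ereal_add_le_if_le_abs_diff[of w "peak (R i)" "\<nu> i"] by simp
  qed
  show "peak (R i) \<le> ereal (f i) \<and> ereal (f i) \<le> ereal w" if "excess R \<Omega> \<le> 0"
  proof -
    have "peak (R i) \<le> ereal w"
      using that assms(2) by (simp add: simple_agent_def w_def not_less)
    then show ?thesis
      using down[OF that] \<nu> ereal_le_diff_if_le_abs_diff[of "peak (R i)" w "\<nu> i"] by simp
  qed
qed

lemma simple_allocation_imp_same_sided_between:
  fixes R :: "'a::finite \<Rightarrow> pref"
  assumes "simple_allocation R \<Omega> f"
  shows "same_sided R \<Omega> f \<and> between_peaks_and_equal_split R \<Omega> f"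
proof -
  define w where "w = \<Omega> / real CARD('a)"
  note simple = simple_allocation_simple_agent[OF assms]
  note nonsimple = simple_allocation_nonsimple_agent[OF assms]
  have "same_sided R \<Omega> f"
    unfolding same_sided_def
  proof (intro conjI allI impI)
    fix i
    show "0 \<le> excess R \<Omega> \<Longrightarrow> ereal (f i) \<le> peak (R i)"
      using simple[of i] nonsimple(1)[of i] by (cases "simple_agent R \<Omega> i") auto
    show "excess R \<Omega> \<le> 0 \<Longrightarrow> peak (R i) \<le> ereal (f i)"
      using simple[of i] nonsimple(2)[of i] by (cases "simple_agent R \<Omega> i") auto
  qed
  moreover have "ereal (f i) \<in> {min (peak (R i)) (ereal w)..max (peak (R i)) (ereal w)}" for i
    using simple[of i] nonsimple[of i]
    by (cases "simple_agent R \<Omega> i"; cases "0 \<le> excess R \<Omega>")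
      (auto simp: w_def min_le_iff_disj le_max_iff_disj)
  ultimately show ?thesis
    unfolding between_peaks_and_equal_split_def w_def by blast
qed

lemma E_val_eq_abs_sum_deviation:
  fixes R :: "'a::finite \<Rightarrow> pref"
  assumes "\<And>i. simple_agent R \<Omega> i \<Longrightarrow> ereal (f i) = peak (R i)" "sum f UNIV = \<Omega>"
  shows "E_val R \<Omega> = ereal \<bar>\<Sum>j\<in>{j. \<not> simple_agent R \<Omega> j}. f j - \<Omega> / real CARD('a)\<bar>"
proof -
  let ?S = "{j. simple_agent R \<Omega> j}" and ?N = "{j. \<not> simple_agent R \<Omega> j}"
  have "(\<Sum>j\<in>?S. peak (R j)) = (\<Sum>j\<in>?S. ereal (f j))"
    using assms(1) by (intro sum.cong) auto
  moreover have "\<Omega> = sum f ?S + sum f ?N"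
    using assms(2) sum.Int_Diff[of UNIV f ?S] by (simp add: Collect_neg_eq Compl_eq_Diff_UNIV)
  moreover have "(\<Sum>j\<in>?N. f j - \<Omega> / real CARD('a)) = sum f ?N - real (card ?N) * (\<Omega> / real CARD('a))"
    by (simp add: sum_subtractf)
  ultimately show ?thesis
    unfolding E_val_def by simp
qed

lemma same_sided_between_simple_agent:
  fixes R :: "'a::finite \<Rightarrow> pref"
  assumes sided: "same_sided R \<Omega> f" and between: "between_peaks_and_equal_split R \<Omega> f"
    and "simple_agent R \<Omega> i"
  shows "ereal (f i) = peak (R i)"
proof -
  define w where "w = \<Omega> / real CARD('a)"
  have bounds: "min (peak (R i)) (ereal w) \<le> ereal (f i)" "ereal (f i) \<le> max (peak (R i)) (ereal w)"
    using between unfolding between_peaks_and_equal_split_def w_def by auto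
  from assms(3) consider "0 \<le> excess R \<Omega>" "peak (R i) < ereal w"
    | "excess R \<Omega> \<le> 0" "ereal w < peak (R i)"
    unfolding simple_agent_def w_def by blast
  then show ?thesis
  proof cases
    case 1
    then have "peak (R i) \<le> ereal (f i)"
      using bounds(1) min_absorb1[OF less_imp_le[OF 1(2)]] by simp
    moreover have "ereal (f i) \<le> peak (R i)"
      using 1 sided by (simp add: same_sided_def)
    ultimately show ?thesis
      by simp
  next
    case 2
    then have "ereal (f i) \<le> peak (R i)"
      using bounds(2) max_absorb1[OF less_imp_le[OF 2(2)]] by simp
    moreover have "peak (R i) \<le> ereal (f i)"
      using 2 sided by (simp add: same_sided_def)
    ultimately show ?thesis
      by simp
  qed
qed

lemma between_nonsimple_agent:
  fixes R :: "'a::finite \<Rightarrow> pref"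
  assumes between: "between_peaks_and_equal_split R \<Omega> f" and "\<not> simple_agent R \<Omega> i"
  shows "0 \<le> excess R \<Omega> \<Longrightarrow> \<Omega> / real CARD('a) \<le> f i"
    and "excess R \<Omega> \<le> 0 \<Longrightarrow> f i \<le> \<Omega> / real CARD('a)"
proof -
  define w where "w = \<Omega> / real CARD('a)"
  have bounds: "min (peak (R i)) (ereal w) \<le> ereal (f i)" "ereal (f i) \<le> max (peak (R i)) (ereal w)"
    using between unfolding between_peaks_and_equal_split_def w_def by auto
  show "w \<le> f i" if "0 \<le> excess R \<Omega>"
  proof -
    have "ereal w \<le> peak (R i)"
      using that assms(2) by (simp add: simple_agent_def w_def not_less)
    then show ?thesis
      using bounds(1) by (simp add: min_absorb2)
  qed
  show "f i \<le> w" if "excess R \<Omega> \<le> 0"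
  proof -
    have "peak (R i) \<le> ereal w"
      using that assms(2) by (simp add: simple_agent_def w_def not_less)
    then show ?thesis
      using bounds(2) by (simp add: max_absorb2)
  qed
qed

lemma simple_allocationI:
  fixes R :: "'a::finite \<Rightarrow> pref"
  assumes sided: "same_sided R \<Omega> f" and between: "between_peaks_and_equal_split R \<Omega> f"
    and sum: "sum f UNIV = \<Omega>"
  shows "simple_allocation R \<Omega> f"
proof -
  define w where "w = \<Omega> / real CARD('a)"
  define \<nu> where "\<nu> i = \<bar>f i - w\<bar>" for i
  note simple = same_sided_between_simple_agent[OF sided between]
  note nonsimple = between_nonsimple_agent[OF between, folded w_def]
  text \<open>All non-simple agents deviate from \<open>w\<close> in the same direction.\<close>
  have "(\<Sum>j\<in>{j. \<not> simple_agent R \<Omega> j}. \<nu> j) = \<bar>\<Sum>j\<in>{j. \<not> simple_agent R \<Omega> j}. f j - w\<bar>"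
  proof (cases "0 \<le> excess R \<Omega>")
    case True
    then show ?thesis
      using nonsimple(1) unfolding \<nu>_def by (subst abs_of_nonneg) (auto intro: sum_nonneg)
  next
    case False
    then have "(\<Sum>j\<in>{j. \<not> simple_agent R \<Omega> j}. \<nu> j) = - (\<Sum>j\<in>{j. \<not> simple_agent R \<Omega> j}. f j - w)"
      using nonsimple(2) unfolding \<nu>_def by (simp add: sum_negf[symmetric])
    moreover have "(\<Sum>j\<in>{j. \<not> simple_agent R \<Omega> j}. f j - w) \<le> 0"
      using False nonsimple(2) by (intro sum_nonpos) simp
    ultimately show ?thesis
      by simp
  qed
  then have "ereal (\<Sum>j\<in>{j. \<not> simple_agent R \<Omega> j}. \<nu> j) = E_val R \<Omega>"
    using E_val_eq_abs_sum_deviation[OF simple sum] unfolding w_def by simp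
  moreover have "ereal (\<nu> i) \<le> \<bar>peak (R i) - ereal w\<bar>" for i
    using between unfolding between_peaks_and_equal_split_def \<nu>_def w_def
    by (intro abs_diff_le_if_between) blast
  ultimately show ?thesis
    unfolding simple_allocation_def w_def[symmetric]
    using simple nonsimple by (intro exI[of _ \<nu>]) (simp add: \<nu>_def)
qed

lemma simple_allocation_iff:
  assumes "sum f UNIV = \<Omega>"
  shows "simple_allocation R \<Omega> f \<longleftrightarrow> same_sided R \<Omega> f \<and> between_peaks_and_equal_split R \<Omega> f"
  using simple_allocation_imp_same_sided_between[of R \<Omega> f] simple_allocationI[OF _ _ assms] by blast

lemma simple_allocation_of_rule_iff:
  assumes "is_rule \<phi>" "economy R \<Omega>"
  shows "simple_allocation R \<Omega> (\<phi> R \<Omega>) \<longleftrightarrow>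
    pareto_optimal R \<Omega> (\<phi> R \<Omega>) \<and> between_peaks_and_equal_split R \<Omega> (\<phi> R \<Omega>)"
proof -
  have "pareto_optimal R \<Omega> (\<phi> R \<Omega>) \<longleftrightarrow> same_sided R \<Omega> (\<phi> R \<Omega>)"
    using economy_SP[OF assms(2)] rule_nonneg[OF assms] rule_sum[OF assms]
    by (intro pareto_optimal_iff_same_sided) auto
  then show ?thesis
    using simple_allocation_iff[OF rule_sum[OF assms]] by simp
qed

theorem proposition4:
  fixes \<phi> :: "'a::finite rule"
  assumes "is_rule \<phi>"
  shows "(own_peak_only \<phi> \<and> efficient \<phi> \<and> peak_responsive \<phi> \<and> NOM \<phi>) \<longleftrightarrow>
         (simple_rule \<phi> \<and> peak_responsive \<phi>)"
proof
  assume "own_peak_only \<phi> \<and> efficient \<phi> \<and> peak_responsive \<phi> \<and> NOM \<phi>"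
  then have opo: "own_peak_only \<phi>" and eff: "efficient \<phi>" and pr: "peak_responsive \<phi>"
    and nom: "NOM \<phi>"
    by auto
  have "simple_allocation R \<Omega> (\<phi> R \<Omega>)" if "economy R \<Omega>" for R \<Omega>
    using simple_allocation_of_rule_iff[OF assms that]
      eff[unfolded efficient_iff_pareto_optimal, rule_format, OF that]
      NOM_imp_between_peaks_and_equal_split[OF assms opo pr nom that] by blast
  with opo pr show "simple_rule \<phi> \<and> peak_responsive \<phi>"
    by (simp add: simple_rule_iff_simple_allocation)
next
  assume "simple_rule \<phi> \<and> peak_responsive \<phi>"
  then have opo: "own_peak_only \<phi>" and pr: "peak_responsive \<phi>"
    and simple: "\<And>R \<Omega>. economy R \<Omega> \<Longrightarrow> simple_allocation R \<Omega> (\<phi> R \<Omega>)"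
    by (auto simp: simple_rule_iff_simple_allocation)
  have "pareto_optimal R \<Omega> (\<phi> R \<Omega>)" and "between_peaks_and_equal_split R \<Omega> (\<phi> R \<Omega>)"
    if "economy R \<Omega>" for R \<Omega>
    using simple[OF that] simple_allocation_of_rule_iff[OF assms that] by blast+
  then have "efficient \<phi>" and "NOM \<phi>"
    by (auto simp: efficient_iff_pareto_optimal
        intro: NOM_if_between_peaks_and_equal_split[OF assms pr])
  with opo pr show "own_peak_only \<phi> \<and> efficient \<phi> \<and> peak_responsive \<phi> \<and> NOM \<phi>"
    by blast
qed

end
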